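(* Fix a monomial order on $S$. Let $J,E,E'$ be ideals of $S$ such that $(J,E)$ and $(J,E')$ are G-nice pairs. The following are equivalent: (a) $(J+E)\cap(J+E')=J+(E\cap E')$ and $(J,E\cap E')$ is a G-nice pair; (b) $\mathrm{in}((J+E)\cap(J+E'))=\mathrm{in}(J)+\mathrm{in}(E\cap E')$.
   Context: $K$ is a field and $S=K[x_1,\ldots,x_n]$ with a fixed monomial order. For $0\neq f\in S$, $\mathrm{in}(f)$ denotes its leading monomial; for an ideal $I$, $\mathrm{in}(I)$ is the ideal generated by the leading monomials of the nonzero elements of $I$. A pair $(J,E)$ of ideals of $S$ is called Gröbner nice (G-nice) if $\mathrm{in}(J+E)=\mathrm{in}(J)+\mathrm{in}(E)$ (equivalently, the union of a Gröbner basis of $J$ and a Gröbner basis of $E$ is a Gröbner basis of $J+E$; equivalently, $\mathrm{in}(J\cap E)=\mathrm{in}(J)\cap\mathrm{in}(E)$). *)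

theory Defs
  imports "HOL-Library.Poly_Mapping"
begin

text \<open>Polynomial ring S = K[x_v : v in 'v] over a field K, with finitely many variables
  (the finite type 'v).\<close>

type_synonym ('v, 'k) mpoly = "('v \<Rightarrow>\<^sub>0 nat) \<Rightarrow>\<^sub>0 'k"

definition monomial_order :: "(('v \<Rightarrow>\<^sub>0 nat) \<Rightarrow> ('v \<Rightarrow>\<^sub>0 nat) \<Rightarrow> bool) \<Rightarrow> bool" where
  "monomial_order le \<longleftrightarrow>
     (\<forall>a. le a a) \<and>
     (\<forall>a b. le a b \<and> le b a \<longrightarrow> a = b) \<and>
     (\<forall>a b c. le a b \<and> le b c \<longrightarrow> le a c) \<and>
     (\<forall>a b. le a b \<or> le b a) \<and>
     (\<forall>a. le 0 a) \<and>
     (\<forall>a b c. le a b \<longrightarrow> le (a + c) (b + c))"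

definition monom :: "('v \<Rightarrow>\<^sub>0 nat) \<Rightarrow> ('v, 'k::field) mpoly" where
  "monom m = Poly_Mapping.single m 1"

definition lead_monom :: "(('v \<Rightarrow>\<^sub>0 nat) \<Rightarrow> ('v \<Rightarrow>\<^sub>0 nat) \<Rightarrow> bool) \<Rightarrow> ('v, 'k::field) mpoly \<Rightarrow> ('v \<Rightarrow>\<^sub>0 nat)" where
  "lead_monom le f = (THE m. m \<in> Poly_Mapping.keys f \<and> (\<forall>m' \<in> Poly_Mapping.keys f. le m' m))"

definition is_ideal :: "('v, 'k::field) mpoly set \<Rightarrow> bool" where
  "is_ideal I \<longleftrightarrow> 0 \<in> I \<and> (\<forall>a\<in>I. \<forall>b\<in>I. a + b \<in> I) \<and> (\<forall>r. \<forall>a\<in>I. r * a \<in> I)"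

definition ideal_gen :: "('v, 'k::field) mpoly set \<Rightarrow> ('v, 'k) mpoly set" where
  "ideal_gen X = \<Inter> {I. is_ideal I \<and> X \<subseteq> I}"

definition ideal_sum :: "('v, 'k::field) mpoly set \<Rightarrow> ('v, 'k) mpoly set \<Rightarrow> ('v, 'k) mpoly set" where
  "ideal_sum I J = {a + b | a b. a \<in> I \<and> b \<in> J}"

definition init_ideal :: "(('v \<Rightarrow>\<^sub>0 nat) \<Rightarrow> ('v \<Rightarrow>\<^sub>0 nat) \<Rightarrow> bool) \<Rightarrow> ('v, 'k::field) mpoly set \<Rightarrow> ('v, 'k) mpoly set" where
  "init_ideal le I = ideal_gen {monom (lead_monom le f) | f. f \<in> I \<and> f \<noteq> 0}"

definition G_nice :: "(('v \<Rightarrow>\<^sub>0 nat) \<Rightarrow> ('v \<Rightarrow>\<^sub>0 nat) \<Rightarrow> bool) \<Rightarrow> ('v, 'k::field) mpoly set \<Rightarrow> ('v, 'k) mpoly set \<Rightarrow> bool" where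
  "G_nice le J E \<longleftrightarrow> init_ideal le (ideal_sum J E) = ideal_sum (init_ideal le J) (init_ideal le E)"

end

theory Submission
  imports Defs "HOL-Library.Ramsey"
begin

text \<open>
  (a) gives (b) at once. Conversely, put A = J + (E \<inter> E') and B = (J + E) \<inter> (J + E'). Always
  A \<subseteq> B and in(J) + in(E \<inter> E') \<subseteq> in(A) \<subseteq> in(B), so (b) forces in(A) = in(B). Nested ideals with
  equal initial ideals coincide: an element of B - A with minimal leading monomial could be reduced
  by an element of A whose leading monomial divides it to an element of B - A with smaller leading
  monomial, and a monomial order on finitely many variables is well-founded. Hence A = B, and then
  (b) says that (J, E \<inter> E') is G-nice.
\<close>

lemma monomial_order_refl: "monomial_order le \<Longrightarrow> le a a"
  unfolding monomial_order_def by blast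

lemma monomial_order_antisym: "monomial_order le \<Longrightarrow> le a b \<Longrightarrow> le b a \<Longrightarrow> a = b"
  unfolding monomial_order_def by blast

lemma monomial_order_trans: "monomial_order le \<Longrightarrow> le a b \<Longrightarrow> le b c \<Longrightarrow> le a c"
  unfolding monomial_order_def by blast

lemma monomial_order_total: "monomial_order le \<Longrightarrow> le a b \<or> le b a"
  unfolding monomial_order_def by blast

lemma monomial_order_add_right: "monomial_order le \<Longrightarrow> le a b \<Longrightarrow> le (a + c) (b + c)"
  unfolding monomial_order_def by blast

lemma monomial_order_le_if_divides:
  assumes mo: "monomial_order le" and divides: "\<And>v. Poly_Mapping.lookup a v \<le> Poly_Mapping.lookup b v"
  shows "le a b"
proof -
  have "b = (b - a) + a"
  proof (rule poly_mapping_eqI)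
    show "Poly_Mapping.lookup b v = Poly_Mapping.lookup (b - a + a) v" for v
      using divides[of v] by (simp add: lookup_add lookup_minus)
  qed
  moreover have "le (0 + a) ((b - a) + a)"
    using mo unfolding monomial_order_def by blast
  ultimately show ?thesis by simp
qed

text \<open>A strict descent strictly decreases some exponent, so over finitely many variables the strict
  order is a transitive relation covered by finitely many well-founded ones.\<close>

lemma monomial_order_wf:
  fixes le :: "('v::finite \<Rightarrow>\<^sub>0 nat) \<Rightarrow> ('v \<Rightarrow>\<^sub>0 nat) \<Rightarrow> bool"
  assumes mo: "monomial_order le"
  shows "wf {(a, b). le a b \<and> a \<noteq> b}"
proof (rule trans_disj_wf_implies_wf)
  show "trans {(a, b). le a b \<and> a \<noteq> b}"
    using monomial_order_trans[OF mo] monomial_order_antisym[OF mo] unfolding trans_def by blast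
  obtain x :: "nat \<Rightarrow> 'v" where x: "bij_betw x {0..<card (UNIV :: 'v set)} UNIV"
    using ex_bij_betw_nat_finite[of "UNIV :: 'v set"] by auto
  define T where "T i = inv_image less_than (\<lambda>a. Poly_Mapping.lookup a (x i))" for i
  have "{(a, b). le a b \<and> a \<noteq> b} \<subseteq> (\<Union>i<card (UNIV :: 'v set). T i)"
  proof (rule subsetI, rule ccontr)
    fix p assume "p \<in> {(a, b). le a b \<and> a \<noteq> b}" and p: "p \<notin> (\<Union>i<card (UNIV :: 'v set). T i)"
    then obtain a b where ab: "p = (a, b)" "le a b" "a \<noteq> b" by blast
    then have "Poly_Mapping.lookup b (x i) \<le> Poly_Mapping.lookup a (x i)" if "i < card (UNIV :: 'v set)" for i
      using that p ab(1) by (auto simp: T_def not_less)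
    then have "Poly_Mapping.lookup b v \<le> Poly_Mapping.lookup a v" for v
      using x unfolding bij_betw_def by (metis UNIV_I atLeastLessThan_iff imageE)
    then show False
      using ab monomial_order_le_if_divides[OF mo] monomial_order_antisym[OF mo] by blast
  qed
  moreover have "wf (T i)" for i
    unfolding T_def by (rule wf_inv_image[OF wf_less_than])
  ultimately show "disj_wf {(a, b). le a b \<and> a \<noteq> b}"
    unfolding disj_wf by blast
qed

lemma monomial_order_finite_has_greatest:
  assumes mo: "monomial_order le" and "finite K" "K \<noteq> {}"
  shows "\<exists>m\<in>K. \<forall>m'\<in>K. le m' m"
  using assms(2,3)
proof (induction K rule: finite_ne_induct)
  case (singleton x)
  then show ?case using monomial_order_refl[OF mo] by auto
next
  case (insert x F)
  then obtain m where m: "m \<in> F" "\<forall>m'\<in>F. le m' m" by auto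
  then show ?case
    using monomial_order_total[OF mo, of x m] monomial_order_refl[OF mo] monomial_order_trans[OF mo]
    by blast
qed

lemma lead_monom_greatest:
  assumes mo: "monomial_order le" and "f \<noteq> 0"
  shows "lead_monom le f \<in> Poly_Mapping.keys f \<and> (\<forall>m\<in>Poly_Mapping.keys f. le m (lead_monom le f))"
proof -
  obtain m where m: "m \<in> Poly_Mapping.keys f" "\<forall>m'\<in>Poly_Mapping.keys f. le m' m"
    using monomial_order_finite_has_greatest[OF mo finite_keys, of f] \<open>f \<noteq> 0\<close> by auto
  have "lead_monom le f = m"
    unfolding lead_monom_def by (rule the_equality) (use m monomial_order_antisym[OF mo] in blast)+
  with m show ?thesis by simp
qed

lemma lead_monom_in_keys: "monomial_order le \<Longrightarrow> f \<noteq> 0 \<Longrightarrow> lead_monom le f \<in> Poly_Mapping.keys f"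
  using lead_monom_greatest by blast

lemma le_lead_monom:
  assumes "monomial_order le" and "m \<in> Poly_Mapping.keys f"
  shows "le m (lead_monom le f)"
proof -
  have "f \<noteq> 0" using assms(2) by auto
  then show ?thesis using lead_monom_greatest[OF assms(1)] assms(2) by blast
qed

lemma lookup_single_mult:
  fixes g :: "'a::cancel_comm_monoid_add \<Rightarrow>\<^sub>0 'b::semiring_0"
  shows "Poly_Mapping.lookup (Poly_Mapping.single d c * g) (d + k) = c * Poly_Mapping.lookup g k"
proof -
  have "Poly_Mapping.lookup (Poly_Mapping.single d c * g) (d + k)
      = c * (\<Sum>q. Poly_Mapping.lookup g q when d + k = d + q)"
    by (simp add: lookup_mult lookup_single when_mult)
  also have "(\<Sum>q. Poly_Mapping.lookup g q when d + k = d + q) = (\<Sum>q. Poly_Mapping.lookup g q when k = q)"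
    by (rule Sum_any.cong) (simp only: add_left_cancel)
  finally show ?thesis by simp
qed

lemma keys_single_mult:
  "Poly_Mapping.keys (Poly_Mapping.single d c * g) \<subseteq> (+) d ` Poly_Mapping.keys g"
proof
  fix x assume "x \<in> Poly_Mapping.keys (Poly_Mapping.single d c * g)"
  then obtain a b where "x = a + b" "a \<in> Poly_Mapping.keys (Poly_Mapping.single d c)"
    "b \<in> Poly_Mapping.keys g"
    using keys_mult by blast
  then show "x \<in> (+) d ` Poly_Mapping.keys g" by (simp split: if_splits)
qed

text \<open>The coefficient c makes the leading terms of f and of the multiple of g cancel.\<close>

lemma keys_reduction_below_lead_monom:
  fixes f g :: "('v, 'k::field) mpoly"
  assumes mo: "monomial_order le" and "f \<noteq> 0" "g \<noteq> 0"
    and lead: "lead_monom le f = d + lead_monom le g"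
    and c: "c = Poly_Mapping.lookup f (lead_monom le f) / Poly_Mapping.lookup g (lead_monom le g)"
    and k: "k \<in> Poly_Mapping.keys (f - Poly_Mapping.single d c * g)"
  shows "le k (lead_monom le f) \<and> k \<noteq> lead_monom le f"
proof
  have "k \<in> Poly_Mapping.keys f \<or> k \<in> Poly_Mapping.keys (Poly_Mapping.single d c * g)"
    using k keys_diff[of f "Poly_Mapping.single d c * g"] by blast
  then show "le k (lead_monom le f)"
  proof
    assume "k \<in> Poly_Mapping.keys f"
    then show ?thesis by (rule le_lead_monom[OF mo])
  next
    assume "k \<in> Poly_Mapping.keys (Poly_Mapping.single d c * g)"
    then obtain m where m: "m \<in> Poly_Mapping.keys g" and "k = d + m"
      using keys_single_mult by blast
    then show ?thesis
      using monomial_order_add_right[OF mo le_lead_monom[OF mo m], of d]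
      by (simp only: lead add.commute)
  qed
  have "Poly_Mapping.lookup g (lead_monom le g) \<noteq> 0"
    using lead_monom_in_keys[OF mo \<open>g \<noteq> 0\<close>] by (simp add: in_keys_iff)
  then have "Poly_Mapping.lookup (Poly_Mapping.single d c * g) (lead_monom le f)
      = Poly_Mapping.lookup f (lead_monom le f)"
    unfolding lead lookup_single_mult c by simp
  then have "Poly_Mapping.lookup (f - Poly_Mapping.single d c * g) (lead_monom le f) = 0"
    by (simp add: lookup_minus)
  then show "k \<noteq> lead_monom le f"
    using k by (auto simp: in_keys_iff)
qed

lemma is_ideal_ideal_gen: "is_ideal (ideal_gen X)"
  unfolding ideal_gen_def is_ideal_def by auto

lemma ideal_gen_least: "is_ideal I \<Longrightarrow> X \<subseteq> I \<Longrightarrow> ideal_gen X \<subseteq> I"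
  unfolding ideal_gen_def by auto

lemma ideal_gen_mono: "X \<subseteq> Y \<Longrightarrow> ideal_gen X \<subseteq> ideal_gen Y"
  unfolding ideal_gen_def by auto

lemma is_ideal_init_ideal: "is_ideal (init_ideal le A)"
  unfolding init_ideal_def by (rule is_ideal_ideal_gen)

lemma init_ideal_mono: "A \<subseteq> B \<Longrightarrow> init_ideal le A \<subseteq> init_ideal le B"
  unfolding init_ideal_def by (rule ideal_gen_mono) blast

lemma monom_lead_monom_in_init_ideal:
  "f \<in> A \<Longrightarrow> f \<noteq> 0 \<Longrightarrow> monom (lead_monom le f) \<in> init_ideal le A"
  unfolding init_ideal_def ideal_gen_def by blast

lemma ideal_zero: "is_ideal I \<Longrightarrow> 0 \<in> I"
  unfolding is_ideal_def by blast

lemma ideal_add: "is_ideal I \<Longrightarrow> a \<in> I \<Longrightarrow> b \<in> I \<Longrightarrow> a + b \<in> I"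
  unfolding is_ideal_def by blast

lemma ideal_mult: "is_ideal I \<Longrightarrow> a \<in> I \<Longrightarrow> r * a \<in> I"
  unfolding is_ideal_def by blast

lemma ideal_diff: "is_ideal I \<Longrightarrow> a \<in> I \<Longrightarrow> b \<in> I \<Longrightarrow> a - b \<in> I"
  using ideal_add ideal_mult[of I b "- 1"] by (metis diff_conv_add_uminus mult_minus1)

lemma is_ideal_Int: "is_ideal I \<Longrightarrow> is_ideal J \<Longrightarrow> is_ideal (I \<inter> J)"
  unfolding is_ideal_def by auto

lemma is_ideal_ideal_sum:
  assumes "is_ideal I" "is_ideal J"
  shows "is_ideal (ideal_sum I J)"
  unfolding is_ideal_def ideal_sum_def
proof (intro conjI ballI allI)
  show "0 \<in> {a + b |a b. a \<in> I \<and> b \<in> J}"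
    using assms ideal_zero by force
next
  fix x y assume "x \<in> {a + b |a b. a \<in> I \<and> b \<in> J}" "y \<in> {a + b |a b. a \<in> I \<and> b \<in> J}"
  then obtain a b a' b' where "x = a + b" "y = a' + b'" "a \<in> I" "b \<in> J" "a' \<in> I" "b' \<in> J"
    by blast
  moreover have "a + b + (a' + b') = (a + a') + (b + b')"
    by (simp add: algebra_simps)
  ultimately show "x + y \<in> {a + b |a b. a \<in> I \<and> b \<in> J}"
    using assms ideal_add by blast
next
  fix r x assume "x \<in> {a + b |a b. a \<in> I \<and> b \<in> J}"
  then obtain a b where "x = a + b" "a \<in> I" "b \<in> J" by blast
  moreover have "r * (a + b) = r * a + r * b"
    by (simp add: distrib_left)
  ultimately show "r * x \<in> {a + b |a b. a \<in> I \<and> b \<in> J}"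
    using assms ideal_mult by blast
qed

lemma ideal_sum_least: "is_ideal I \<Longrightarrow> A \<subseteq> I \<Longrightarrow> B \<subseteq> I \<Longrightarrow> ideal_sum A B \<subseteq> I"
  unfolding ideal_sum_def by (auto intro: ideal_add)

lemma ideal_sum_upper1: "0 \<in> B \<Longrightarrow> A \<subseteq> ideal_sum A B"
  unfolding ideal_sum_def by force

lemma ideal_sum_upper2: "0 \<in> A \<Longrightarrow> B \<subseteq> ideal_sum A B"
  unfolding ideal_sum_def by force

lemma ideal_sum_init_ideal_subset:
  assumes "is_ideal J" "is_ideal E"
  shows "ideal_sum (init_ideal le J) (init_ideal le E) \<subseteq> init_ideal le (ideal_sum J E)"
  using assms
  by (intro ideal_sum_least is_ideal_init_ideal init_ideal_mono ideal_sum_upper1 ideal_sum_upper2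
      ideal_zero)

lemma is_ideal_keys_subset:
  assumes upward: "\<And>m d. m \<in> M \<Longrightarrow> d + m \<in> M"
  shows "is_ideal {p :: ('v, 'k::field) mpoly. Poly_Mapping.keys p \<subseteq> M}"
  unfolding is_ideal_def
proof (intro conjI ballI allI)
  fix a b :: "('v, 'k) mpoly"
  assume "a \<in> {p. Poly_Mapping.keys p \<subseteq> M}" "b \<in> {p. Poly_Mapping.keys p \<subseteq> M}"
  then show "a + b \<in> {p. Poly_Mapping.keys p \<subseteq> M}"
    using keys_add[of a b] by auto
next
  fix r a :: "('v, 'k) mpoly"
  assume "a \<in> {p. Poly_Mapping.keys p \<subseteq> M}"
  have "x \<in> M" if x: "x \<in> Poly_Mapping.keys (r * a)" for x
  proof -
    obtain u w where "x = u + w" "w \<in> Poly_Mapping.keys a"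
      using x keys_mult[of r a] by blast
    with \<open>a \<in> {p. Poly_Mapping.keys p \<subseteq> M}\<close> show ?thesis
      using upward by blast
  qed
  then show "r * a \<in> {p. Poly_Mapping.keys p \<subseteq> M}" by blast
qed simp

lemma monom_in_init_ideal_imp_multiple:
  fixes A :: "('v, 'k::field) mpoly set"
  assumes "monom m \<in> init_ideal le A"
  shows "\<exists>f\<in>A. f \<noteq> 0 \<and> (\<exists>d. m = d + lead_monom le f)"
proof -
  define M where "M = {d + lead_monom le f | d f. f \<in> A \<and> f \<noteq> 0}"
  have "init_ideal le A \<subseteq> {p :: ('v, 'k) mpoly. Poly_Mapping.keys p \<subseteq> M}"
    unfolding init_ideal_def
  proof (rule ideal_gen_least[OF is_ideal_keys_subset])
    show "d + m \<in> M" if "m \<in> M" for m d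
    proof -
      obtain d' f where "m = d' + lead_monom le f" "f \<in> A" "f \<noteq> 0"
        using \<open>m \<in> M\<close> unfolding M_def by blast
      moreover have "d + (d' + lead_monom le f) = (d + d') + lead_monom le f"
        by (simp add: add.assoc)
      ultimately show ?thesis unfolding M_def by blast
    qed
    show "{monom (lead_monom le f) | f. f \<in> A \<and> f \<noteq> 0} \<subseteq> {p. Poly_Mapping.keys p \<subseteq> M}"
    proof
      fix p assume "p \<in> {monom (lead_monom le f) | f. f \<in> A \<and> f \<noteq> 0}"
      then obtain f where "p = monom (lead_monom le f)" "f \<in> A" "f \<noteq> 0" by blast
      moreover have "lead_monom le f \<in> M"
        unfolding M_def using \<open>f \<in> A\<close> \<open>f \<noteq> 0\<close> by (intro CollectI exI[of _ 0] exI[of _ f]) simp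
      ultimately show "p \<in> {p. Poly_Mapping.keys p \<subseteq> M}"
        by (simp add: monom_def)
    qed
  qed
  with assms have "m \<in> M"
    unfolding monom_def by auto
  then show ?thesis
    unfolding M_def by blast
qed

lemma ideal_subset_if_init_ideal_subset:
  fixes A B :: "('v::finite, 'k::field) mpoly set"
  assumes mo: "monomial_order le" and "is_ideal A" "is_ideal B" "A \<subseteq> B"
    and init: "init_ideal le B \<subseteq> init_ideal le A"
  shows "B \<subseteq> A"
proof (rule ccontr)
  assume "\<not> B \<subseteq> A"
  then have "lead_monom le ` (B - A) \<noteq> {}"
    by blast
  then obtain m where "m \<in> lead_monom le ` (B - A)"
    and minimal: "\<And>m'. (m', m) \<in> {(a, b). le a b \<and> a \<noteq> b} \<Longrightarrow> m' \<notin> lead_monom le ` (B - A)"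
    by (rule wfE_min'[OF monomial_order_wf[OF mo]]) (rule that)
  then obtain f where f: "f \<in> B" "f \<notin> A" and m: "m = lead_monom le f"
    by blast
  have "f \<noteq> 0"
    using f ideal_zero[OF \<open>is_ideal A\<close>] by auto
  then have "monom (lead_monom le f) \<in> init_ideal le A"
    using init monom_lead_monom_in_init_ideal[OF f(1)] by blast
  then obtain g d where g: "g \<in> A" "g \<noteq> 0" and lead: "lead_monom le f = d + lead_monom le g"
    using monom_in_init_ideal_imp_multiple by blast
  define c where "c = Poly_Mapping.lookup f (lead_monom le f) / Poly_Mapping.lookup g (lead_monom le g)"
  define h where "h = f - Poly_Mapping.single d c * g"
  have multiple: "Poly_Mapping.single d c * g \<in> A"
    using ideal_mult[OF \<open>is_ideal A\<close> g(1)] .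
  have "h \<in> B"
    unfolding h_def using ideal_diff[OF \<open>is_ideal B\<close> f(1)] multiple \<open>A \<subseteq> B\<close> by blast
  moreover have "h \<notin> A"
  proof
    assume "h \<in> A"
    then have "h + Poly_Mapping.single d c * g \<in> A"
      using ideal_add[OF \<open>is_ideal A\<close>] multiple by blast
    with f(2) show False
      unfolding h_def by simp
  qed
  ultimately have "lead_monom le h \<in> lead_monom le ` (B - A)"
    by blast
  have "h \<noteq> 0"
    using \<open>h \<notin> A\<close> ideal_zero[OF \<open>is_ideal A\<close>] by auto
  then have "lead_monom le h \<in> Poly_Mapping.keys (f - Poly_Mapping.single d c * g)"
    unfolding h_def[symmetric] by (rule lead_monom_in_keys[OF mo])
  then have "le (lead_monom le h) m \<and> lead_monom le h \<noteq> m"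
    unfolding m by (rule keys_reduction_below_lead_monom[OF mo \<open>f \<noteq> 0\<close> g(2) lead c_def])
  then show False
    using minimal \<open>lead_monom le h \<in> lead_monom le ` (B - A)\<close> by blast
qed

theorem mainTheorem4:
  fixes le :: "('v::finite \<Rightarrow>\<^sub>0 nat) \<Rightarrow> ('v \<Rightarrow>\<^sub>0 nat) \<Rightarrow> bool"
    and J E E' :: "('v, 'k::field) mpoly set"
  assumes "monomial_order le"
    and "is_ideal J" and "is_ideal E" and "is_ideal E'"
    and "G_nice le J E" and "G_nice le J E'"
  shows "(ideal_sum J E \<inter> ideal_sum J E' = ideal_sum J (E \<inter> E') \<and> G_nice le J (E \<inter> E'))
     \<longleftrightarrow> init_ideal le (ideal_sum J E \<inter> ideal_sum J E') = ideal_sum (init_ideal le J) (init_ideal le (E \<inter> E'))"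
proof
  assume "ideal_sum J E \<inter> ideal_sum J E' = ideal_sum J (E \<inter> E') \<and> G_nice le J (E \<inter> E')"
  then show "init_ideal le (ideal_sum J E \<inter> ideal_sum J E') = ideal_sum (init_ideal le J) (init_ideal le (E \<inter> E'))"
    unfolding G_nice_def by simp
next
  let ?A = "ideal_sum J (E \<inter> E')" and ?B = "ideal_sum J E \<inter> ideal_sum J E'"
  assume init_B: "init_ideal le ?B = ideal_sum (init_ideal le J) (init_ideal le (E \<inter> E'))"
  have "is_ideal (E \<inter> E')"
    using assms(3,4) by (rule is_ideal_Int)
  then have "is_ideal ?A"
    using assms(2) is_ideal_ideal_sum by blast
  have "is_ideal ?B"
    using assms(2-4) by (intro is_ideal_Int is_ideal_ideal_sum)
  have "?A \<subseteq> ?B"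
    unfolding ideal_sum_def by blast
  have "init_ideal le ?B \<subseteq> init_ideal le ?A"
    unfolding init_B using assms(2) \<open>is_ideal (E \<inter> E')\<close> by (rule ideal_sum_init_ideal_subset)
  then have "?B \<subseteq> ?A"
    by (rule ideal_subset_if_init_ideal_subset[OF assms(1) \<open>is_ideal ?A\<close> \<open>is_ideal ?B\<close> \<open>?A \<subseteq> ?B\<close>])
  with \<open>?A \<subseteq> ?B\<close> have "?B = ?A"
    by blast
  with init_B show "?B = ?A \<and> G_nice le J (E \<inter> E')"
    unfolding G_nice_def by simp
qed

end
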